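(* Let $\mathfrak g$ be of type $C_n$ and $J\subseteq I$. Then for $s\ge1$, $\mathbf A_{s,J}=\mathbf A^1_{s,J}\sqcup\mathbf A^2_{s,J}$ where $$\mathbf A^1_{s,J}=\{\{\beta_{i_k,j_k}\}_{1\le k\le s}\in\mathbf A^1_s:\ i_k,j_k\notin J\ \forall k\},$$ and, if $n\notin J$, $$\mathbf A^2_{s,J}=\{\{\alpha_{\ell,n}\}\cup\{\beta_{i_k,j_k}\}_{1\le k\le s-1}\in\mathbf A^2_s:\ \ell\notin J,\ \{\beta_{i_k,j_k}\}_{1\le k\le s-1}\in\mathbf A^1_{s-1,J}\},$$ while $\mathbf A^2_{s,J}=\emptyset$ if $n\in J$. Consequently $\sum_{s\ge0}\#\mathbf A_{s,J}=2^{n-\#J}$.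
   Context: Simple roots $\alpha_1,\dots,\alpha_n$ of $C_n$ numbered as in Bourbaki, $I=\{1,\dots,n\}$; $\alpha_{i,j}=\alpha_i+\dots+\alpha_j$ ($i\le j$), $\beta_{k,\ell}=\alpha_{k,n-1}+\alpha_{\ell,n}$ ($k\le\ell\le n-1$), $\theta=\beta_{1,1}$. $\mathbf A^1_s=\{\{\beta_{i_k,j_k}\}_{1\le k\le s}: i_1<\dots<i_s\le j_s<\dots<j_1\le n-1\}$, $\mathbf A^2_s=\{\{\alpha_{\ell,n}\}\cup\{\beta_{i_k,j_k}\}_{1\le k\le s-1}:\{\beta_{i_k,j_k}\}\in\mathbf A^1_{s-1},\ \ell<i_1\}$. For $\eta=\sum_i d_i(\eta)\alpha_i$, $R^+(J)=\{\alpha\in R^+:d_i(\alpha)=0\ \forall i\notin J\}$. A $J$-antichain is a subset $A\subseteq R^+$ with $A\cap R^+(J)=\emptyset$, distinct elements pairwise incomparable (order: $\lambda\le\mu$ iff $\mu-\lambda$ is a nonnegative integer combination of simple roots), and $\alpha-\alpha_j\notin R$ for $\alpha\in A$, $j\in J$. $\Phi(A)=\{\alpha\in R^+:\alpha\ge\beta$ for some $\beta\in A\}$; $A$ is abelian if $\beta_1+\beta_2\notin R$ for all $\beta_1,\beta_2\in\Phi(A)$. $\mathbf A_{s,J}$ is the set of abelian $J$-antichains with $s$ elements; $\mathbf A_{0,J}$ and $\mathbf A^1_{0,J}$ consist of the empty antichain. *)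

theory Defs
  imports Complex_Main "HOL-Library.Function_Algebras"
begin

text \<open>Root system of type C_n, Bourbaki numbering. A weight/root is encoded by its
coefficient vector w.r.t. the simple roots: eta i = d_i(eta) for i in {1..n},
and eta i = 0 outside {1..n}.\<close>

type_synonym wt = "nat \<Rightarrow> int"

definition simple :: "nat \<Rightarrow> wt" where
  "simple i = (\<lambda>k. if k = i then 1 else 0)"

definition alpha :: "nat \<Rightarrow> nat \<Rightarrow> wt" where
  "alpha i j = (\<lambda>k. if i \<le> k \<and> k \<le> j then 1 else 0)"

definition beta :: "nat \<Rightarrow> nat \<Rightarrow> nat \<Rightarrow> wt" where
  "beta n k l = alpha k (n - 1) + alpha l n"

definition posroots :: "nat \<Rightarrow> wt set" where
  "posroots n = {alpha i j | i j. 1 \<le> i \<and> i \<le> j \<and> j \<le> n}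
              \<union> {beta n k l | k l. 1 \<le> k \<and> k \<le> l \<and> l \<le> n - 1}"

definition roots :: "nat \<Rightarrow> wt set" where
  "roots n = posroots n \<union> uminus ` posroots n"

definition rle :: "nat \<Rightarrow> wt \<Rightarrow> wt \<Rightarrow> bool" where
  "rle n lam mu = (\<exists>c :: nat \<Rightarrow> nat. mu - lam = (\<lambda>k. \<Sum>i\<in>{1..n}. int (c i) * simple i k))"

definition posroots_J :: "nat \<Rightarrow> nat set \<Rightarrow> wt set" where
  "posroots_J n J = {a \<in> posroots n. \<forall>i\<in>{1..n} - J. a i = 0}"

definition J_antichain :: "nat \<Rightarrow> nat set \<Rightarrow> wt set \<Rightarrow> bool" where
  "J_antichain n J A =
     (A \<subseteq> posroots n \<and> A \<inter> posroots_J n J = {}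
      \<and> (\<forall>a\<in>A. \<forall>b\<in>A. a \<noteq> b \<longrightarrow> \<not> rle n a b)
      \<and> (\<forall>a\<in>A. \<forall>j\<in>J. a - simple j \<notin> roots n))"

definition Phi :: "nat \<Rightarrow> wt set \<Rightarrow> wt set" where
  "Phi n A = {a \<in> posroots n. \<exists>b\<in>A. rle n b a}"

definition abelian :: "nat \<Rightarrow> wt set \<Rightarrow> bool" where
  "abelian n A = (\<forall>b1\<in>Phi n A. \<forall>b2\<in>Phi n A. b1 + b2 \<notin> roots n)"

definition A_sJ :: "nat \<Rightarrow> nat \<Rightarrow> nat set \<Rightarrow> wt set set" where
  "A_sJ n s J = {A. J_antichain n J A \<and> abelian n A \<and> finite A \<and> card A = s}"

definition idx_chain :: "nat \<Rightarrow> nat \<Rightarrow> (nat \<Rightarrow> nat) \<Rightarrow> (nat \<Rightarrow> nat) \<Rightarrow> bool" where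
  "idx_chain n s i j =
     ((\<forall>k. 1 \<le> k \<longrightarrow> k < s \<longrightarrow> i k < i (Suc k) \<and> j (Suc k) < j k)
      \<and> (1 \<le> s \<longrightarrow> 1 \<le> i 1 \<and> i s \<le> j s \<and> j 1 \<le> n - 1))"

definition betaset :: "nat \<Rightarrow> nat \<Rightarrow> (nat \<Rightarrow> nat) \<Rightarrow> (nat \<Rightarrow> nat) \<Rightarrow> wt set" where
  "betaset n s i j = (\<lambda>k. beta n (i k) (j k)) ` {1..s}"

definition A1 :: "nat \<Rightarrow> nat \<Rightarrow> wt set set" where
  "A1 n s = {betaset n s i j | i j. idx_chain n s i j}"

text \<open>A^2_s: {alpha_{l,n}} union an element of A^1_{s-1}, with l < i_1
 (condition vacuous when s - 1 = 0; 1 <= l <= n so that alpha_{l,n} is a root).\<close>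
definition A2 :: "nat \<Rightarrow> nat \<Rightarrow> wt set set" where
  "A2 n s = {insert (alpha l n) (betaset n (s - 1) i j) | l i j.
               idx_chain n (s - 1) i j \<and> 1 \<le> l \<and> l \<le> n \<and> (1 \<le> s - 1 \<longrightarrow> l < i 1)}"

definition A1_J :: "nat \<Rightarrow> nat \<Rightarrow> nat set \<Rightarrow> wt set set" where
  "A1_J n s J = {betaset n s i j | i j. idx_chain n s i j
                   \<and> (\<forall>k\<in>{1..s}. i k \<notin> J \<and> j k \<notin> J)}"

definition A2_J :: "nat \<Rightarrow> nat \<Rightarrow> nat set \<Rightarrow> wt set set" where
  "A2_J n s J = (if n \<in> J then {} else
     {insert (alpha l n) (betaset n (s - 1) i j) | l i j.
        insert (alpha l n) (betaset n (s - 1) i j) \<in> A2 n s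
        \<and> idx_chain n (s - 1) i j \<and> 1 \<le> l \<and> l \<le> n \<and> (1 \<le> s - 1 \<longrightarrow> l < i 1)
        \<and> l \<notin> J \<and> betaset n (s - 1) i j \<in> A1_J n (s - 1) J})"

end

theory Submission
  imports Defs
begin

text \<open>
  The proof rests on three observations.
  (1) A set of positive roots is abelian iff each of its elements has coefficient 1 at
      alpha_n.  These roots are exactly the roots rho(k,m) = alpha_{k,n} + alpha_{m,n-1}
      for 1 <= k <= m <= n, i.e. alpha_{k,n} (m = n) and beta_{k,m} (m < n), and
      rho(k,m) <= rho(k',m') iff k' <= k and m' <= m.
  (2) rho(k,m) satisfies the J-conditions of a J-antichain iff k, m are not in J.
  Hence the abelian J-antichains are exactly the images rho(P) of the families P of
  strictly nested intervals [k,m] with endpoints in S = {1..n} - J.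
  (3) A nested family is determined by its set of endpoints (peel off the outermost
      interval), and every subset of S arises, so there are 2^|S| such families.
      Listing a nested family from the outside in gives the index chains of A^1.
  Families without an interval ending at n give A^1_{s,J}, families containing an
  interval [l,n] give A^2_{s,J}; injectivity of rho yields disjointness and the count.
\<close>

lemma simple_apply: "simple i x = (if x = i then 1 else 0)"
  by (simp add: simple_def)

lemma alpha_apply: "alpha i j x = (if i \<le> x \<and> x \<le> j then 1 else 0)"
  by (simp add: alpha_def)

lemma beta_apply:
  "beta n k l x = (if k \<le> x \<and> x \<le> n - 1 then 1 else 0) + (if l \<le> x \<and> x \<le> n then 1 else 0)"
  by (simp add: beta_def alpha_def)

lemma posroots_cases:
  assumes "r \<in> posroots n"
  obtains i j where "1 \<le> i" "i \<le> j" "j \<le> n" "r = alpha i j"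
  | k l where "1 \<le> k" "k \<le> l" "l \<le> n - 1" "r = beta n k l"
  using assms unfolding posroots_def by blast

lemma alpha_in_posroots: "1 \<le> i \<Longrightarrow> i \<le> j \<Longrightarrow> j \<le> n \<Longrightarrow> alpha i j \<in> posroots n"
  unfolding posroots_def by blast

lemma beta_in_posroots: "1 \<le> k \<Longrightarrow> k \<le> l \<Longrightarrow> l \<le> n - 1 \<Longrightarrow> beta n k l \<in> posroots n"
  unfolding posroots_def by blast

lemma posroot_nonneg: "r \<in> posroots n \<Longrightarrow> r x \<ge> 0"
  by (erule posroots_cases) (auto simp: alpha_apply beta_apply)

lemma posroot_outside: "r \<in> posroots n \<Longrightarrow> x \<notin> {1..n} \<Longrightarrow> r x = 0"
  by (erule posroots_cases) (auto simp: alpha_apply beta_apply)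

lemma posroot_at_n: "r \<in> posroots n \<Longrightarrow> r n \<le> 1"
  by (erule posroots_cases) (auto simp: alpha_apply beta_apply)

lemma posroot_support_interval:
  "r \<in> posroots n \<Longrightarrow> r a \<noteq> 0 \<Longrightarrow> r b \<noteq> 0 \<Longrightarrow> a \<le> x \<Longrightarrow> x \<le> b \<Longrightarrow> r x \<noteq> 0"
  by (erule posroots_cases) (auto simp: alpha_apply beta_apply split: if_splits)

lemma posroot_two_persists:
  "r \<in> posroots n \<Longrightarrow> r a = 2 \<Longrightarrow> a \<le> x \<Longrightarrow> x \<le> n - 1 \<Longrightarrow> r x = 2"
  by (erule posroots_cases) (auto simp: alpha_apply beta_apply split: if_splits)

lemma posroot_two_at_n: "r \<in> posroots n \<Longrightarrow> r a = 2 \<Longrightarrow> r n = 1"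
  by (erule posroots_cases) (auto simp: alpha_apply beta_apply split: if_splits)

lemma root_at_n_bounded: "r \<in> roots n \<Longrightarrow> \<bar>r n\<bar> \<le> 1"
  unfolding roots_def using posroot_at_n posroot_nonneg by fastforce

lemma root_positive_coeff: "r \<in> roots n \<Longrightarrow> r x > 0 \<Longrightarrow> r \<in> posroots n"
  unfolding roots_def using posroot_nonneg[of _ n x] by fastforce

lemma rle_posroots_iff:
  assumes "a \<in> posroots n" "b \<in> posroots n"
  shows "rle n a b \<longleftrightarrow> (\<forall>x. a x \<le> b x)"
proof
  assume "rle n a b"
  then obtain c where c: "b - a = (\<lambda>k. \<Sum>i\<in>{1..n}. int (c i) * simple i k)"
    unfolding rle_def by blast
  show "\<forall>x. a x \<le> b x"
  proof
    fix x
    have "b x - a x = (\<Sum>i\<in>{1..n}. int (c i) * simple i x)"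
      using fun_cong[OF c, of x] by simp
    also have "\<dots> \<ge> 0" by (intro sum_nonneg) (auto simp: simple_apply)
    finally show "a x \<le> b x" by simp
  qed
next
  assume le: "\<forall>x. a x \<le> b x"
  define c where "c i = nat (b i - a i)" for i
  have "b - a = (\<lambda>k. \<Sum>i\<in>{1..n}. int (c i) * simple i k)"
  proof
    fix x
    have "(\<Sum>i\<in>{1..n}. int (c i) * simple i x) = (if x \<in> {1..n} then int (c x) else 0)"
      by (simp add: simple_apply if_distrib[of "\<lambda>t. _ * t"] sum.delta cong: if_cong)
    then show "(b - a) x = (\<Sum>i\<in>{1..n}. int (c i) * simple i x)"
      using le posroot_outside[OF assms(1), of x] posroot_outside[OF assms(2), of x]
      by (simp add: c_def)
  qed
  then show "rle n a b" unfolding rle_def by blast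
qed


section \<open>Positive roots with coefficient 1 at alpha_n\<close>

text \<open>The pair (k,m) with 1 <= k <= m <= n encodes rho(k,m) = alpha_{k,n} + alpha_{m,n-1},
  which is alpha_{k,n} if m = n and beta_{k,m} otherwise.\<close>

definition root_pairs :: "nat \<Rightarrow> (nat \<times> nat) set" where
  "root_pairs n = {(k, m). 1 \<le> k \<and> k \<le> m \<and> m \<le> n}"

definition pair_root :: "nat \<Rightarrow> nat \<times> nat \<Rightarrow> wt" where
  "pair_root n p = (if snd p = n then alpha (fst p) n else beta n (fst p) (snd p))"

lemma pair_root_apply:
  "(k, m) \<in> root_pairs n \<Longrightarrow> pair_root n (k, m) x =
     (if k \<le> x \<and> x \<le> n then 1 else 0) + (if m \<le> x \<and> x \<le> n - 1 then 1 else 0)"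
  by (auto simp: pair_root_def root_pairs_def alpha_apply beta_apply)

lemma pair_root_in_posroots: "p \<in> root_pairs n \<Longrightarrow> pair_root n p \<in> posroots n"
  by (auto simp: pair_root_def root_pairs_def intro!: alpha_in_posroots beta_in_posroots)

lemma pair_root_at_n: "n \<ge> 2 \<Longrightarrow> p \<in> root_pairs n \<Longrightarrow> pair_root n p n = 1"
  by (cases p) (auto simp: pair_root_apply root_pairs_def)

lemma beta_as_pair_root: "m < n \<Longrightarrow> beta n k m = pair_root n (k, m)"
  by (simp add: pair_root_def)

text \<open>The first entry of a pair is the first index where rho is nonzero, the second entry
  is the first index where it equals 2 (or n); so rho is injective.\<close>
lemma pair_root_inj: "n \<ge> 2 \<Longrightarrow> inj_on (pair_root n) (root_pairs n)"
proof (rule inj_onI)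
  fix p q assume p: "p \<in> root_pairs n" and q: "q \<in> root_pairs n"
    and eq: "pair_root n p = pair_root n q" and "n \<ge> 2"
  obtain k m k' m' where pq: "p = (k, m)" "q = (k', m')" by (cases p, cases q)
  have v: "pair_root n (k, m) x = pair_root n (k', m') x" for x using eq pq by simp
  have "k = k'" using v[of k] v[of k'] p q pq by (auto simp: pair_root_apply root_pairs_def split: if_splits)
  moreover have "m = m'" using v[of m] v[of m'] p q pq by (auto simp: pair_root_apply root_pairs_def split: if_splits)
  ultimately show "p = q" using pq by simp
qed

lemma pair_root_image_inj: "n \<ge> 2 \<Longrightarrow> inj_on (\<lambda>P. pair_root n ` P) (Pow (root_pairs n))"
  using inj_on_image_eq_iff[OF pair_root_inj] by (auto intro: inj_onI)

lemma posroot_at_n_is_pair_root: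
  assumes "r \<in> posroots n" "r n = 1" "n \<ge> 2"
  shows "\<exists>p\<in>root_pairs n. r = pair_root n p"
  using assms(1)
proof (cases rule: posroots_cases)
  case (1 i j)
  then have "j = n" using assms(2) by (auto simp: alpha_apply split: if_splits)
  then show ?thesis using 1 by (intro bexI[of _ "(i, n)"]) (auto simp: pair_root_def root_pairs_def)
next
  case (2 k l)
  then show ?thesis using assms(3)
    by (intro bexI[of _ "(k, l)"]) (auto simp: pair_root_def root_pairs_def)
qed

lemma pair_root_rle_iff:
  assumes "(k, m) \<in> root_pairs n" "(k', m') \<in> root_pairs n"
  shows "rle n (pair_root n (k, m)) (pair_root n (k', m')) \<longleftrightarrow> k' \<le> k \<and> m' \<le> m"
proof -
  have "(\<forall>x. pair_root n (k, m) x \<le> pair_root n (k', m') x) \<longleftrightarrow> k' \<le> k \<and> m' \<le> m"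
  proof
    assume le: "\<forall>x. pair_root n (k, m) x \<le> pair_root n (k', m') x"
    show "k' \<le> k \<and> m' \<le> m"
      using le[rule_format, of k] le[rule_format, of m] assms
      by (auto simp: pair_root_apply root_pairs_def split: if_splits)
  qed (use assms in \<open>auto simp: pair_root_apply\<close>)
  then show ?thesis using assms by (simp add: rle_posroots_iff pair_root_in_posroots)
qed

section \<open>Abelian sets of positive roots\<close>

text \<open>A set of positive roots is abelian iff all its elements have coefficient 1 at alpha_n:
  a root alpha_{i,j} with j < n lies below alpha_{i,n-1} and alpha_{i,n}, whose sum
  beta_{i,i} is a root; conversely two roots with coefficient 1 at n never sum to a root.\<close>
lemma abelian_iff_at_n:
  assumes "A \<subseteq> posroots n" "n \<ge> 2"
  shows "abelian n A \<longleftrightarrow> (\<forall>a\<in>A. a n = 1)"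
proof
  assume ab: "abelian n A"
  show "\<forall>a\<in>A. a n = 1"
  proof (rule ballI, rule ccontr)
    fix a assume aA: "a \<in> A" and an: "a n \<noteq> 1"
    have ap: "a \<in> posroots n" using aA assms by auto
    then show False
    proof (cases rule: posroots_cases)
      case (1 i j)
      then have jn: "j < n" using an by (auto simp: alpha_apply split: if_splits)
      have "alpha i (n-1) \<in> Phi n A"
        unfolding Phi_def using 1 jn aA ap
        by (auto simp: rle_posroots_iff alpha_in_posroots alpha_apply intro!: bexI[of _ a] alpha_in_posroots)
      moreover have "alpha i n \<in> Phi n A"
        unfolding Phi_def using 1 jn aA ap
        by (auto simp: rle_posroots_iff alpha_in_posroots alpha_apply intro!: bexI[of _ a] alpha_in_posroots)
      moreover have "alpha i (n-1) + alpha i n \<in> roots n"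
        using 1 jn beta_in_posroots[of i i n] by (simp add: beta_def roots_def)
      ultimately show False using ab unfolding abelian_def by blast
    next
      case (2 k l)
      have "\<not> n \<le> n - 1" "l \<le> n" using assms(2) 2 by auto
      then show False using an 2 by (auto simp: beta_apply)
    qed
  qed
next
  assume at_n: "\<forall>a\<in>A. a n = 1"
  have Phi_at_n: "b n = 1" if b: "b \<in> Phi n A" for b
  proof -
    obtain a where a: "a \<in> A" "rle n a b" "b \<in> posroots n" using b unfolding Phi_def by blast
    then have "a n \<le> b n" using assms rle_posroots_iff by blast
    then show ?thesis using at_n a posroot_at_n[of b n] by force
  qed
  show "abelian n A" unfolding abelian_def
  proof (intro ballI)
    fix b1 b2 assume "b1 \<in> Phi n A" "b2 \<in> Phi n A"
    then have "(b1 + b2) n = 2" using Phi_at_n[of b1] Phi_at_n[of b2] by simp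
    then show "b1 + b2 \<notin> roots n" using root_at_n_bounded[of "b1 + b2" n] by auto
  qed
qed

section \<open>The J-conditions for the roots rho(k,m)\<close>

lemma posroot_is_root: "r \<in> posroots n \<Longrightarrow> r \<in> roots n"
  by (simp add: roots_def)

text \<open>rho(k,m) is supported on {k..n}, so it lies in R^+(J) iff {k..n} is contained in J.\<close>
lemma pair_root_in_posroots_J_iff:
  assumes "(k, m) \<in> root_pairs n"
  shows "pair_root n (k, m) \<in> posroots_J n J \<longleftrightarrow> {k..n} \<subseteq> J"
proof -
  have zero: "pair_root n (k, m) i = 0 \<longleftrightarrow> \<not> (k \<le> i \<and> i \<le> n)" for i
    using assms by (auto simp: pair_root_apply root_pairs_def)
  show ?thesis using assms pair_root_in_posroots[OF assms] unfolding posroots_J_def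
    by (auto simp: zero root_pairs_def)
qed

lemma pair_root_minus_first:
  assumes "(k, m) \<in> root_pairs n" "(k, m) \<noteq> (n, n)"
  shows "pair_root n (k, m) - simple k \<in> roots n"
proof -
  let ?q = "if k < m then (k + 1, m) else (k, k + 1)"
  have q: "?q \<in> root_pairs n" using assms by (auto simp: root_pairs_def)
  have "pair_root n (k, m) - simple k = pair_root n ?q"
    using assms q by (auto simp: fun_eq_iff pair_root_apply simple_apply root_pairs_def)
  then show ?thesis using posroot_is_root[OF pair_root_in_posroots[OF q]] by simp
qed

lemma pair_root_minus_second:
  assumes "(k, m) \<in> root_pairs n" "k < m"
  shows "pair_root n (k, m) - simple m \<in> roots n"
proof (cases "m = n")
  case True
  then have "pair_root n (k, m) - simple m = alpha k (n - 1)"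
    using assms by (auto simp: fun_eq_iff pair_root_apply simple_apply alpha_apply root_pairs_def)
  moreover have "alpha k (n - 1) \<in> posroots n"
    using assms True by (intro alpha_in_posroots) (auto simp: root_pairs_def)
  ultimately show ?thesis by (simp add: posroot_is_root)
next
  case False
  then have q: "(k, m + 1) \<in> root_pairs n" using assms by (auto simp: root_pairs_def)
  have "pair_root n (k, m) - simple m = pair_root n (k, m + 1)"
    using assms False q by (auto simp: fun_eq_iff pair_root_apply simple_apply root_pairs_def)
  then show ?thesis using posroot_is_root[OF pair_root_in_posroots[OF q]] by simp
qed

text \<open>Subtracting any other simple root alpha_j never gives a root: the result would be a
  positive root (its coefficient at k stays positive) with a forbidden coefficient pattern.\<close>
lemma pair_root_minus_other:
  assumes "(k, m) \<in> root_pairs n" "j \<noteq> k" "j \<noteq> m" "1 \<le> j" "j \<le> n" "n \<ge> 2"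
  shows "pair_root n (k, m) - simple j \<notin> roots n"
proof
  let ?v = "pair_root n (k, m) - simple j"
  have val: "?v x = pair_root n (k, m) x - simple j x" for x by simp
  assume "?v \<in> roots n"
  moreover have vk: "?v k > 0" using assms by (auto simp: pair_root_apply simple_apply root_pairs_def)
  ultimately have pos: "?v \<in> posroots n" by (rule root_positive_coeff)
  have "j < k \<or> (k < j \<and> j < m) \<or> (m < j \<and> j < n) \<or> (m < j \<and> j = n)"
    using assms by (simp add: root_pairs_def) arith
  then consider "j < k" | "k < j" "j < m" | "m < j" "j < n" | "m < j" "j = n"
    by blast
  then show False
  proof cases
    case 1
    then show False using posroot_nonneg[OF pos, of j] assms
      by (auto simp: pair_root_apply simple_apply root_pairs_def)
  next
    case 2
    have "?v n \<noteq> 0" "?v j = 0" using assms 2 by (auto simp: pair_root_apply simple_apply root_pairs_def)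
    moreover have "?v k \<noteq> 0" using vk by simp
    ultimately show False using posroot_support_interval[OF pos, of k n j] 2 assms(5) by simp
  next
    case 3
    have "?v m = 2" "?v j \<noteq> 2" using assms 3 by (auto simp: pair_root_apply simple_apply root_pairs_def)
    moreover have "j \<le> n - 1" using 3 by simp
    ultimately show False using posroot_two_persists[OF pos, of m j] 3 by simp
  next
    case 4
    have "?v m = 2" "?v n \<noteq> 1" using assms 4 by (auto simp: pair_root_apply simple_apply root_pairs_def)
    then show False using posroot_two_at_n[OF pos] by blast
  qed
qed

lemma pair_root_J_conditions_iff:
  assumes "(k, m) \<in> root_pairs n" "n \<ge> 2" "J \<subseteq> {1..n}"
  shows "(pair_root n (k, m) \<notin> posroots_J n J \<and> (\<forall>j\<in>J. pair_root n (k, m) - simple j \<notin> roots n))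
         \<longleftrightarrow> k \<notin> J \<and> m \<notin> J"
proof
  assume conds: "pair_root n (k, m) \<notin> posroots_J n J \<and> (\<forall>j\<in>J. pair_root n (k, m) - simple j \<notin> roots n)"
  show "k \<notin> J \<and> m \<notin> J"
  proof (cases "(k, m) = (n, n)")
    case True
    then show ?thesis using conds pair_root_in_posroots_J_iff[OF assms(1), of J] by auto
  next
    case False
    then have "k \<notin> J" using conds pair_root_minus_first[OF assms(1)] by auto
    moreover have "m \<notin> J" if "k < m" using conds pair_root_minus_second[OF assms(1) that] by auto
    ultimately show ?thesis using assms(1) by (cases "k < m") (auto simp: root_pairs_def)
  qed
next
  assume "k \<notin> J \<and> m \<notin> J"
  then show "pair_root n (k, m) \<notin> posroots_J n J \<and> (\<forall>j\<in>J. pair_root n (k, m) - simple j \<notin> roots n)"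
    using assms pair_root_in_posroots_J_iff[OF assms(1), of J] pair_root_minus_other[OF assms(1)]
    by (fastforce simp: root_pairs_def)
qed

section \<open>Nested families of intervals\<close>

definition nested :: "('a::linorder \<times> 'a) set \<Rightarrow> bool" where
  "nested P \<longleftrightarrow> (\<forall>p\<in>P. \<forall>q\<in>P. p \<noteq> q \<longrightarrow>
      (fst p < fst q \<and> snd q < snd p) \<or> (fst q < fst p \<and> snd p < snd q))"

definition nested_in :: "'a::linorder set \<Rightarrow> ('a \<times> 'a) set \<Rightarrow> bool" where
  "nested_in S P \<longleftrightarrow> (\<forall>(a, b)\<in>P. a \<le> b \<and> a \<in> S \<and> b \<in> S) \<and> nested P"

definition endpoints :: "('a \<times> 'a) set \<Rightarrow> 'a set" where
  "endpoints P = fst ` P \<union> snd ` P"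

lemma endpoints_insert: "endpoints (insert (a, b) P) = insert a (insert b (endpoints P))"
  by (auto simp: endpoints_def)

lemma pair_endpoints: "(a, b) \<in> P \<Longrightarrow> a \<in> endpoints P \<and> b \<in> endpoints P"
  unfolding endpoints_def by (metis UnI1 UnI2 fst_conv snd_conv rev_image_eqI)

lemma nested_in_Diff: "nested_in S P \<Longrightarrow> nested_in S (P - X)"
  unfolding nested_in_def nested_def by blast

lemma nested_in_finite: "finite S \<Longrightarrow> nested_in S P \<Longrightarrow> finite P"
  by (rule finite_subset[of P "S \<times> S"]) (auto simp: nested_in_def)

lemma nested_in_insert_outer:
  assumes "nested_in S P" "a \<le> b" "a \<in> S" "b \<in> S" "\<forall>(c, d)\<in>P. a < c \<and> d < b"
  shows "nested_in S (insert (a, b) P)"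
  unfolding nested_in_def
proof
  show "\<forall>(x, y)\<in>insert (a, b) P. x \<le> y \<and> x \<in> S \<and> y \<in> S"
    using assms unfolding nested_in_def by auto
  have nP: "nested P" using assms(1) unfolding nested_in_def by blast
  show "nested (insert (a, b) P)" unfolding nested_def
  proof (intro ballI impI)
    fix p q assume "p \<in> insert (a, b) P" "q \<in> insert (a, b) P" "p \<noteq> q"
    then consider "p = (a, b)" "q \<in> P" | "q = (a, b)" "p \<in> P" | "p \<in> P" "q \<in> P" by auto
    then show "(fst p < fst q \<and> snd q < snd p) \<or> (fst q < fst p \<and> snd p < snd q)"
    proof cases
      case 1 then show ?thesis using assms(5) by (cases q) auto
    next
      case 2 then show ?thesis using assms(5) by (cases p) auto
    next
      case 3 then show ?thesis using nP \<open>p \<noteq> q\<close> unfolding nested_def by blast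
    qed
  qed
qed

text \<open>A nonempty finite nested family has an outermost member, the one with least left end.\<close>
lemma nested_outermost:
  assumes "finite P" "nested P" "P \<noteq> {}"
  obtains a b where "(a, b) \<in> P" "\<forall>(c, d)\<in>P. (c, d) \<noteq> (a, b) \<longrightarrow> a < c \<and> d < b"
proof -
  define a where "a = Min (fst ` P)"
  have "a \<in> fst ` P" using assms unfolding a_def by (intro Min_in) auto
  then obtain b where ab: "(a, b) \<in> P" by force
  have "a < c \<and> d < b" if cd: "(c, d) \<in> P" "(c, d) \<noteq> (a, b)" for c d
  proof -
    have "c \<in> fst ` P" using cd(1) by force
    then have "a \<le> c" using assms(1) unfolding a_def by simp
    moreover have "(a < c \<and> d < b) \<or> (c < a \<and> b < d)"
      using assms(2)[unfolded nested_def, rule_format, OF cd(1) ab cd(2)] by auto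
    ultimately show "a < c \<and> d < b" by auto
  qed
  then show thesis using that ab by blast
qed

lemma outermost_endpoints:
  fixes P :: "('a::linorder \<times> 'a) set"
  assumes "(a, b) \<in> P" "\<forall>(c, d)\<in>P. (c, d) \<noteq> (a, b) \<longrightarrow> a < c \<and> d < b" "\<forall>(c, d)\<in>P. c \<le> d"
  shows "\<forall>x\<in>endpoints P. a \<le> x \<and> x \<le> b" "endpoints (P - {(a, b)}) = endpoints P - {a, b}"
proof -
  have inner: "a \<le> c \<and> c \<le> b \<and> a \<le> d \<and> d \<le> b \<and> ((c, d) \<noteq> (a, b) \<longrightarrow> a < c \<and> c < b \<and> a < d \<and> d < b)"
    if cd: "(c, d) \<in> P" for c d
  proof (cases "(c, d) = (a, b)")
    case True
    then show ?thesis using assms(3) cd by auto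
  next
    case False
    have "a < c \<and> d < b" "c \<le> d" using assms(2,3) cd False by auto
    then show ?thesis using False by auto
  qed
  show "\<forall>x\<in>endpoints P. a \<le> x \<and> x \<le> b"
  proof
    fix x assume "x \<in> endpoints P"
    then obtain c d where "(c, d) \<in> P" "x = c \<or> x = d" unfolding endpoints_def by force
    then show "a \<le> x \<and> x \<le> b" using inner by blast
  qed
  show "endpoints (P - {(a, b)}) = endpoints P - {a, b}"
  proof
    show "endpoints (P - {(a, b)}) \<subseteq> endpoints P - {a, b}"
    proof
      fix x assume "x \<in> endpoints (P - {(a, b)})"
      then obtain c d where cd: "(c, d) \<in> P" "(c, d) \<noteq> (a, b)" "x = c \<or> x = d"
        unfolding endpoints_def by force
      then have "x \<noteq> a" "x \<noteq> b" using inner[OF cd(1)] by auto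
      then show "x \<in> endpoints P - {a, b}" using cd unfolding endpoints_def by force
    qed
    show "endpoints P - {a, b} \<subseteq> endpoints (P - {(a, b)})"
      unfolding endpoints_def by force
  qed
qed
lemma nested_in_endpoints_inj:
  assumes "finite S" "nested_in S P" "nested_in S Q" "endpoints P = endpoints Q"
  shows "P = Q"
  using assms(2-4)
proof (induction "card (endpoints P)" arbitrary: P Q rule: less_induct)
  case less
  show ?case
  proof (cases "P = {}")
    case True
    then show ?thesis using less.prems by (auto simp: endpoints_def)
  next
    case False
    have Q_ne: "Q \<noteq> {}" using False less.prems(3) by (auto simp: endpoints_def)
    have fin: "finite P" "finite Q" using less.prems assms(1) nested_in_finite by auto
    have le: "\<forall>(c, d)\<in>P. c \<le> d" "\<forall>(c, d)\<in>Q. c \<le> d" using less.prems by (auto simp: nested_in_def)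
    obtain a b where ab: "(a, b) \<in> P" "\<forall>(c, d)\<in>P. (c, d) \<noteq> (a, b) \<longrightarrow> a < c \<and> d < b"
      using nested_outermost[OF fin(1) _ False] less.prems by (auto simp: nested_in_def)
    obtain a' b' where ab': "(a', b') \<in> Q" "\<forall>(c, d)\<in>Q. (c, d) \<noteq> (a', b') \<longrightarrow> a' < c \<and> d < b'"
      using nested_outermost[OF fin(2) _ Q_ne] less.prems by (auto simp: nested_in_def)
    note B = outermost_endpoints[OF ab le(1)] and B' = outermost_endpoints[OF ab' le(2)]
    have ends: "a \<in> endpoints P" "b \<in> endpoints P" "a' \<in> endpoints Q" "b' \<in> endpoints Q"
      using ab(1) ab'(1) unfolding endpoints_def by force+
    then have same: "a = a'" "b = b'" using B(1) B'(1) less.prems(3) by (metis order_antisym)+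
    have "finite (endpoints P)" using fin unfolding endpoints_def by auto
    then have "card (endpoints (P - {(a, b)})) < card (endpoints P)"
      using B(2) card_Diff2_less[OF _ ends(1,2)] by (simp add: Diff_insert2[symmetric])
    then have "P - {(a, b)} = Q - {(a, b)}"
      using less.hyps nested_in_Diff[OF less.prems(1)] nested_in_Diff[OF less.prems(2)]
        B(2) B'(2) same less.prems(3) by auto
    then show ?thesis using ab(1) ab'(1) same by blast
  qed
qed

text \<open>Every finite subset of S is the endpoint set of a nested family: pair its minimum
  with its maximum and recurse on the rest.\<close>
lemma nested_in_of_endpoints:
  assumes "finite U" "U \<subseteq> S"
  shows "\<exists>P. nested_in S P \<and> endpoints P = U"
  using assms
proof (induction "card U" arbitrary: U rule: less_induct)
  case less
  show ?case
  proof (cases "U = {}")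
    case True
    then show ?thesis by (intro exI[of _ "{}"]) (auto simp: nested_in_def nested_def endpoints_def)
  next
    case False
    define a where "a = Min U"
    define b where "b = Max U"
    have abU: "a \<in> U" "b \<in> U" using False less.prems(1) unfolding a_def b_def by simp_all
    have bounds: "\<forall>x\<in>U. a \<le> x \<and> x \<le> b" using less.prems(1) unfolding a_def b_def by simp
    have "card (U - {a, b}) < card U"
      using card_Diff2_less[OF less.prems(1) abU] by (simp add: Diff_insert2[symmetric])
    moreover have "finite (U - {a, b})" "U - {a, b} \<subseteq> S" using less.prems by auto
    ultimately obtain P where P: "nested_in S P" "endpoints P = U - {a, b}"
      using less.hyps by blast
    have inside: "\<forall>(c, d)\<in>P. a < c \<and> d < b"
    proof (clarify)
      fix c d assume "(c, d) \<in> P"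
      then have "c \<in> U - {a, b}" "d \<in> U - {a, b}" using pair_endpoints[of c d P] P(2) by auto
      then have "a \<le> c" "a \<noteq> c" "d \<le> b" "d \<noteq> b" using bounds by auto
      then show "a < c \<and> d < b" by (simp add: less_le)
    qed
    have "a \<le> b" "a \<in> S" "b \<in> S" using abU bounds less.prems(2) by auto
    then have "nested_in S (insert (a, b) P)" by (rule nested_in_insert_outer[OF P(1) _ _ _ inside])
    moreover have "endpoints (insert (a, b) P) = U"
      using P(2) abU by (auto simp: endpoints_insert)
    ultimately show ?thesis by blast
  qed
qed

lemma card_nested_in:
  assumes "finite S"
  shows "card {P. nested_in S P} = 2 ^ card S"
proof -
  have "bij_betw endpoints {P. nested_in S P} (Pow S)"
  proof (rule bij_betw_imageI)
    show "inj_on endpoints {P. nested_in S P}"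
      by (rule inj_onI) (use nested_in_endpoints_inj[OF assms] in blast)
    show "endpoints ` {P. nested_in S P} = Pow S"
    proof
      show "endpoints ` {P. nested_in S P} \<subseteq> Pow S"
        unfolding endpoints_def nested_in_def by auto
      show "Pow S \<subseteq> endpoints ` {P. nested_in S P}"
      proof
        fix U assume "U \<in> Pow S"
        then have "finite U" "U \<subseteq> S" using assms finite_subset by auto
        then show "U \<in> endpoints ` {P. nested_in S P}" using nested_in_of_endpoints by blast
      qed
    qed
  qed
  then show ?thesis using assms by (simp add: bij_betw_same_card card_Pow)
qed

lemma nested_enumeration:
  fixes Q :: "('a::linorder \<times> 'a) set"
  assumes "finite Q" "nested Q"
  shows "\<exists>i j. Q = (\<lambda>k. (i k, j k)) ` {1..card Q}
           \<and> (\<forall>k. 1 \<le> k \<longrightarrow> k < card Q \<longrightarrow> i k < i (Suc k) \<and> j (Suc k) < j k)"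
  using assms
proof (induction "card Q" arbitrary: Q)
  case 0
  then show ?case by auto
next
  case (Suc M)
  have "Q \<noteq> {}" using Suc.hyps(2) by auto
  with Suc.prems obtain a b where ab: "(a, b) \<in> Q"
    "\<forall>(c, d)\<in>Q. (c, d) \<noteq> (a, b) \<longrightarrow> a < c \<and> d < b"
    by (rule nested_outermost)
  define Q' where "Q' = Q - {(a, b)}"
  have "M = card Q'" "finite Q'" "nested Q'"
    using Suc.hyps(2) Suc.prems ab(1) unfolding Q'_def nested_def by auto
  then obtain i' j' where ij': "Q' = (\<lambda>k. (i' k, j' k)) ` {1..M}"
    "\<forall>k. 1 \<le> k \<longrightarrow> k < M \<longrightarrow> i' k < i' (Suc k) \<and> j' (Suc k) < j' k"
    using Suc.hyps(1) by blast
  define i where "i k = (if k = 1 then a else i' (k - 1))" for k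
  define j where "j k = (if k = 1 then b else j' (k - 1))" for k
  have "{2..Suc M} = Suc ` {1..M}" by (simp add: image_Suc_atLeastAtMost)
  then have "(\<lambda>k. (i k, j k)) ` {2..Suc M} = (\<lambda>k. (i (Suc k), j (Suc k))) ` {1..M}"
    by (simp only: image_image)
  also have "\<dots> = Q'" using ij'(1) by (auto simp: i_def j_def)
  finally have tail: "(\<lambda>k. (i k, j k)) ` {2..Suc M} = Q'" .
  have "{1..Suc M} = insert 1 {2..Suc M}" by auto
  then have "(\<lambda>k. (i k, j k)) ` {1..Suc M} = insert (a, b) Q'" using tail by (simp add: i_def j_def)
  then have Q_eq: "Q = (\<lambda>k. (i k, j k)) ` {1..card Q}"
    using ab(1) Suc.hyps(2) unfolding Q'_def by auto
  have "i k < i (Suc k) \<and> j (Suc k) < j k" if k: "1 \<le> k" "k < Suc M" for k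
  proof (cases "k = 1")
    case True
    then have "(i' 1, j' 1) \<in> Q'" using ij'(1) k by auto
    then show ?thesis using ab(2) True unfolding Q'_def by (auto simp: i_def j_def)
  next
    case False
    then show ?thesis using ij'(2)[rule_format, of "k - 1"] k by (simp add: i_def j_def)
  qed
  then show ?case using Q_eq Suc.hyps(2) by metis
qed
lemma chain_mono:
  fixes i j :: "nat \<Rightarrow> 'a::linorder"
  assumes "\<forall>k. 1 \<le> k \<longrightarrow> k < s \<longrightarrow> i k < i (Suc k) \<and> j (Suc k) < j k"
    and "1 \<le> a" "a < b" "b \<le> s"
  shows "i a < i b \<and> j b < j a"
  using assms(3,4)
proof (induction b)
  case 0 then show ?case by simp
next
  case (Suc b)
  have step: "i b < i (Suc b) \<and> j (Suc b) < j b" using assms(1,2) Suc.prems by auto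
  show ?case
  proof (cases "a = b")
    case False
    then have "i a < i b \<and> j b < j a" using Suc by simp
    then show ?thesis using step by (meson less_trans)
  qed (use step in simp)
qed

lemma idx_chain_bounds:
  assumes "idx_chain n s i j" "k \<in> {1..s}"
  shows "1 \<le> i k \<and> i k \<le> j k \<and> j k \<le> n - 1"
proof -
  have m: "\<forall>k. 1 \<le> k \<longrightarrow> k < s \<longrightarrow> i k < i (Suc k) \<and> j (Suc k) < j k"
   and b: "1 \<le> i 1" "i s \<le> j s" "j 1 \<le> n - 1" using assms unfolding idx_chain_def by auto
  have "i 1 \<le> i k \<and> j k \<le> j 1" using chain_mono[OF m, of 1 k] assms(2) by (cases "k = 1") auto
  moreover have "i k \<le> i s \<and> j s \<le> j k" using chain_mono[OF m, of k s] assms(2) by (cases "k = s") auto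
  ultimately show ?thesis using b by auto
qed

lemma idx_chain_first_least:
  assumes "idx_chain n s i j" "k \<in> {1..s}"
  shows "i 1 \<le> i k"
proof (cases "k = 1")
  case False
  then show ?thesis using assms chain_mono[of s i j 1 k] unfolding idx_chain_def by auto
qed simp

lemma idx_chain_nested_family:
  assumes chain: "idx_chain n s i j" and avoid: "\<forall>k\<in>{1..s}. i k \<notin> J \<and> j k \<notin> J" and "n \<ge> 2"
  defines "P \<equiv> (\<lambda>k. (i k, j k)) ` {1..s}"
  shows "nested_in ({1..n} - J) P" "card P = s" "\<forall>(a, b)\<in>P. b < n"
    "pair_root n ` P = betaset n s i j"
proof -
  have bounds: "1 \<le> i k \<and> i k \<le> j k \<and> j k \<le> n - 1" if "k \<in> {1..s}" for k
    using idx_chain_bounds[OF chain that] .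
  have cmp: "i a < i b \<and> j b < j a" if "a \<in> {1..s}" "b \<in> {1..s}" "a < b" for a b
    using chain chain_mono[of s i j a b] that unfolding idx_chain_def by auto
  have "inj_on (\<lambda>k. (i k, j k)) {1..s}"
  proof (rule inj_onI)
    fix a b assume ab: "a \<in> {1..s}" "b \<in> {1..s}" "(i a, j a) = (i b, j b)"
    show "a = b" using cmp[OF ab(1,2)] cmp[OF ab(2,1)] ab(3) by (cases a b rule: linorder_cases) auto
  qed
  then show "card P = s" unfolding P_def by (simp add: card_image)
  show "\<forall>(a, b)\<in>P. b < n" unfolding P_def using bounds \<open>n \<ge> 2\<close> by fastforce
  have "nested P" unfolding nested_def P_def
  proof (intro ballI impI)
    fix p q assume "p \<in> (\<lambda>k. (i k, j k)) ` {1..s}" "q \<in> (\<lambda>k. (i k, j k)) ` {1..s}" "p \<noteq> q"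
    then obtain a b where ab: "a \<in> {1..s}" "b \<in> {1..s}" "p = (i a, j a)" "q = (i b, j b)" "a \<noteq> b"
      by blast
    then show "(fst p < fst q \<and> snd q < snd p) \<or> (fst q < fst p \<and> snd p < snd q)"
      using cmp[OF ab(1,2)] cmp[OF ab(2,1)] by (cases a b rule: linorder_cases) auto
  qed
  then show "nested_in ({1..n} - J) P"
    unfolding nested_in_def P_def using bounds avoid \<open>n \<ge> 2\<close> by fastforce
  show "pair_root n ` P = betaset n s i j" unfolding P_def betaset_def image_image
  proof (rule image_cong[OF refl])
    fix k assume "k \<in> {1..s}"
    then have "j k < n" using bounds[of k] \<open>n \<ge> 2\<close> by linarith
    then show "pair_root n (i k, j k) = beta n (i k) (j k)" by (simp add: beta_as_pair_root)
  qed
qed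


lemma nested_family_idx_chain:
  assumes nest: "nested_in ({1..n} - J) Q" and before_n: "\<forall>(a, b)\<in>Q. b < n"
  obtains i j where "idx_chain n (card Q) i j" "\<forall>k\<in>{1..card Q}. i k \<notin> J \<and> j k \<notin> J"
    "Q = (\<lambda>k. (i k, j k)) ` {1..card Q}" "pair_root n ` Q = betaset n (card Q) i j"
proof -
  have "finite Q" "nested Q" using nested_in_finite[OF _ nest] nest by (auto simp: nested_in_def)
  then obtain i j where ij: "Q = (\<lambda>k. (i k, j k)) ` {1..card Q}"
      "\<forall>k. 1 \<le> k \<longrightarrow> k < card Q \<longrightarrow> i k < i (Suc k) \<and> j (Suc k) < j k"
    using nested_enumeration by blast
  have mem: "i k \<le> j k \<and> i k \<in> {1..n} - J \<and> j k \<in> {1..n} - J \<and> j k < n"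
    if "k \<in> {1..card Q}" for k
  proof -
    have "(i k, j k) \<in> Q" using ij(1) that by blast
    then show ?thesis using nest before_n unfolding nested_in_def by auto
  qed
  have "idx_chain n (card Q) i j" unfolding idx_chain_def
  proof (intro conjI impI)
    show "\<forall>k. 1 \<le> k \<longrightarrow> k < card Q \<longrightarrow> i k < i (Suc k) \<and> j (Suc k) < j k" by (rule ij(2))
    assume "1 \<le> card Q"
    then show "1 \<le> i 1" "i (card Q) \<le> j (card Q)" "j 1 \<le> n - 1"
      using mem[of 1] mem[of "card Q"] by auto
  qed
  moreover have "pair_root n ` Q = betaset n (card Q) i j"
    unfolding betaset_def ij(1)[THEN arg_cong[where f = "image (pair_root n)"]] image_image
  proof (rule image_cong[OF refl])
    fix k assume "k \<in> {1..card Q}"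
    then show "pair_root n (i k, j k) = beta n (i k) (j k)" using mem[of k] by (simp add: beta_as_pair_root)
  qed
  moreover have "\<forall>k\<in>{1..card Q}. i k \<notin> J \<and> j k \<notin> J" using mem by blast
  ultimately show thesis using that ij(1) by blast
qed

section \<open>Abelian J-antichains are the images of nested families\<close>

lemma nested_in_root_pairs: "S \<subseteq> {1..n} \<Longrightarrow> nested_in S P \<Longrightarrow> P \<subseteq> root_pairs n"
  by (auto simp: nested_in_def root_pairs_def)

text \<open>An abelian J-antichain consists of roots rho(k,m) (abelianness) with k, m outside J
  (J-conditions), and incomparability of two of them means strict nesting of the pairs.\<close>
lemma abelian_J_antichain_nested:
  assumes "n \<ge> 2" "J \<subseteq> {1..n}" and anti: "J_antichain n J A" and "abelian n A"
  obtains P where "nested_in ({1..n} - J) P" "A = pair_root n ` P"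
proof -
  have A_pos: "A \<subseteq> posroots n" using anti unfolding J_antichain_def by blast
  have at_n: "\<forall>a\<in>A. a n = 1" using abelian_iff_at_n[OF A_pos assms(1)] assms(4) by blast
  define P where "P = {p \<in> root_pairs n. pair_root n p \<in> A}"
  have "A \<subseteq> pair_root n ` P"
  proof
    fix a assume "a \<in> A"
    then obtain p where "p \<in> root_pairs n" "a = pair_root n p"
      using posroot_at_n_is_pair_root[of a n] A_pos at_n assms(1) by blast
    then show "a \<in> pair_root n ` P" using \<open>a \<in> A\<close> by (auto simp: P_def)
  qed
  then have A_eq: "A = pair_root n ` P" by (auto simp: P_def)
  have ends: "a \<le> b \<and> a \<in> {1..n} - J \<and> b \<in> {1..n} - J" if "(a, b) \<in> P" for a b
  proof -
    have pr: "(a, b) \<in> root_pairs n" "pair_root n (a, b) \<in> A" using that by (auto simp: P_def)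
    then have "a \<notin> J \<and> b \<notin> J"
      using pair_root_J_conditions_iff[OF pr(1) assms(1,2)] anti unfolding J_antichain_def by blast
    then show ?thesis using pr(1) by (auto simp: root_pairs_def)
  qed
  have "nested P" unfolding nested_def
  proof (intro ballI impI)
    fix p q assume "p \<in> P" "q \<in> P" "p \<noteq> q"
    then have pq: "p \<in> root_pairs n" "q \<in> root_pairs n" "pair_root n p \<in> A" "pair_root n q \<in> A"
      by (auto simp: P_def)
    then have "pair_root n p \<noteq> pair_root n q"
      using pair_root_inj[OF assms(1)] \<open>p \<noteq> q\<close> by (auto dest: inj_onD)
    then have "\<not> rle n (pair_root n p) (pair_root n q)" "\<not> rle n (pair_root n q) (pair_root n p)"
      using anti pq unfolding J_antichain_def by auto
    then show "(fst p < fst q \<and> snd q < snd p) \<or> (fst q < fst p \<and> snd p < snd q)"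
      using pq(1,2) pair_root_rle_iff by (cases p, cases q) (auto simp: not_le)
  qed
  then show thesis using that ends A_eq unfolding nested_in_def by blast
qed

lemma nested_abelian_J_antichain:
  assumes "n \<ge> 2" "J \<subseteq> {1..n}" and nest: "nested_in ({1..n} - J) P"
  shows "J_antichain n J (pair_root n ` P)" "abelian n (pair_root n ` P)"
proof -
  have P_pairs: "P \<subseteq> root_pairs n" using nested_in_root_pairs nest by blast
  have A_pos: "pair_root n ` P \<subseteq> posroots n" using P_pairs pair_root_in_posroots by blast
  show "abelian n (pair_root n ` P)"
    using abelian_iff_at_n[OF A_pos assms(1)] P_pairs pair_root_at_n[OF assms(1)] by auto
  have J_conds: "pair_root n p \<notin> posroots_J n J \<and> (\<forall>j\<in>J. pair_root n p - simple j \<notin> roots n)"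
    if "p \<in> P" for p
  proof (cases p)
    case (Pair k m)
    have "k \<notin> J \<and> m \<notin> J" using nest that Pair unfolding nested_in_def by auto
    then show ?thesis using pair_root_J_conditions_iff[of k m n J] assms(1,2) P_pairs that Pair by blast
  qed
  have incomparable: "\<not> rle n (pair_root n p) (pair_root n q)" if "p \<in> P" "q \<in> P" "p \<noteq> q" for p q
  proof -
    have "(fst p < fst q \<and> snd q < snd p) \<or> (fst q < fst p \<and> snd p < snd q)"
      using nest that unfolding nested_in_def nested_def by blast
    moreover obtain a b c d where "p = (a, b)" "q = (c, d)" by (cases p, cases q)
    moreover have "p \<in> root_pairs n" "q \<in> root_pairs n" using P_pairs that by auto
    ultimately show ?thesis using pair_root_rle_iff by auto
  qed
  show "J_antichain n J (pair_root n ` P)"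
    unfolding J_antichain_def using A_pos J_conds incomparable by blast
qed

text \<open>Since rho is injective, A_{s,J} is the image of the nested families of size s.\<close>
lemma A_sJ_eq:
  assumes "n \<ge> 2" "J \<subseteq> {1..n}"
  shows "A_sJ n s J = (\<lambda>P. pair_root n ` P) ` {P. nested_in ({1..n} - J) P \<and> card P = s}"
proof -
  have card_eq: "card (pair_root n ` P) = card P" and fin: "finite (pair_root n ` P)"
    if "nested_in ({1..n} - J) P" for P
    using card_image[OF inj_on_subset[OF pair_root_inj[OF assms(1)] nested_in_root_pairs[OF _ that]]]
      nested_in_finite[OF _ that] by auto
  show ?thesis
  proof
    show "A_sJ n s J \<subseteq> (\<lambda>P. pair_root n ` P) ` {P. nested_in ({1..n} - J) P \<and> card P = s}"
    proof
      fix A assume "A \<in> A_sJ n s J"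
      then have A: "J_antichain n J A" "abelian n A" "card A = s" unfolding A_sJ_def by auto
      then obtain P where "nested_in ({1..n} - J) P" "A = pair_root n ` P"
        using abelian_J_antichain_nested[OF assms] by metis
      then show "A \<in> (\<lambda>P. pair_root n ` P) ` {P. nested_in ({1..n} - J) P \<and> card P = s}"
        using A(3) card_eq by auto
    qed
    show "(\<lambda>P. pair_root n ` P) ` {P. nested_in ({1..n} - J) P \<and> card P = s} \<subseteq> A_sJ n s J"
      using nested_abelian_J_antichain[OF assms] card_eq fin unfolding A_sJ_def by auto
  qed
qed

section \<open>The two kinds of antichains\<close>

lemma A1_J_eq:
  assumes "n \<ge> 2"
  shows "A1_J n s J = (\<lambda>P. pair_root n ` P) `
           {P. nested_in ({1..n} - J) P \<and> card P = s \<and> (\<forall>(a, b)\<in>P. b < n)}"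
proof
  show "A1_J n s J \<subseteq> (\<lambda>P. pair_root n ` P) `
           {P. nested_in ({1..n} - J) P \<and> card P = s \<and> (\<forall>(a, b)\<in>P. b < n)}"
  proof
    fix X assume "X \<in> A1_J n s J"
    then obtain i j where X: "X = betaset n s i j" "idx_chain n s i j" "\<forall>k\<in>{1..s}. i k \<notin> J \<and> j k \<notin> J"
      unfolding A1_J_def by blast
    note family = idx_chain_nested_family[OF X(2,3) assms]
    then show "X \<in> (\<lambda>P. pair_root n ` P) `
           {P. nested_in ({1..n} - J) P \<and> card P = s \<and> (\<forall>(a, b)\<in>P. b < n)}"
      using X(1) by blast
  qed
  show "(\<lambda>P. pair_root n ` P) ` {P. nested_in ({1..n} - J) P \<and> card P = s \<and> (\<forall>(a, b)\<in>P. b < n)}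
          \<subseteq> A1_J n s J"
  proof
    fix X assume "X \<in> (\<lambda>P. pair_root n ` P) `
           {P. nested_in ({1..n} - J) P \<and> card P = s \<and> (\<forall>(a, b)\<in>P. b < n)}"
    then obtain Q where Q: "nested_in ({1..n} - J) Q" "card Q = s" "\<forall>(a, b)\<in>Q. b < n"
      "X = pair_root n ` Q" by blast
    from Q(1,3) show "X \<in> A1_J n s J"
    proof (rule nested_family_idx_chain)
      fix i j assume "idx_chain n (card Q) i j" "\<forall>k\<in>{1..card Q}. i k \<notin> J \<and> j k \<notin> J"
        "pair_root n ` Q = betaset n (card Q) i j"
      then show "X \<in> A1_J n s J" unfolding A1_J_def using Q(2,4) by blast
    qed
  qed
qed

text \<open>An element of A^2_{s,J} is rho of a nested family of size s containing an interval [l,n]: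
  the roots beta_{i_k,j_k} come from a nested family strictly inside [l,n].\<close>
lemma A2_J_subset:
  assumes "n \<ge> 2" "X \<in> A2_J n s J" "1 \<le> s"
  shows "X \<in> (\<lambda>P. pair_root n ` P) ` {P. nested_in ({1..n} - J) P \<and> card P = s \<and> (\<exists>l. (l, n) \<in> P)}"
proof -
  have n_J: "n \<notin> J" using assms(2) unfolding A2_J_def by (auto split: if_splits)
  obtain l i j where X: "X = insert (alpha l n) (betaset n (s - 1) i j)" "idx_chain n (s - 1) i j"
    "1 \<le> l" "l \<le> n" "1 \<le> s - 1 \<longrightarrow> l < i 1" "l \<notin> J" "betaset n (s - 1) i j \<in> A1_J n (s - 1) J"
    using assms(2) n_J unfolding A2_J_def by auto
  then obtain Q where Q: "nested_in ({1..n} - J) Q" "card Q = s - 1" "\<forall>(a, b)\<in>Q. b < n"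
    "betaset n (s - 1) i j = pair_root n ` Q"
    unfolding A1_J_eq[OF assms(1)] by blast
  have inside: "l < a \<and> b < n" if ab: "(a, b) \<in> Q" for a b
  proof -
    obtain k where k: "k \<in> {1..s - 1}" "pair_root n (a, b) = beta n (i k) (j k)"
      using ab Q(4) unfolding betaset_def by blast
    have bounds: "1 \<le> i k \<and> i k \<le> j k \<and> j k \<le> n - 1" by (rule idx_chain_bounds[OF X(2) k(1)])
    then have "pair_root n (a, b) = pair_root n (i k, j k)" "(i k, j k) \<in> root_pairs n"
      using k(2) assms(1) by (auto simp: beta_as_pair_root root_pairs_def)
    moreover have "(a, b) \<in> root_pairs n" using nested_in_root_pairs[OF _ Q(1)] ab by auto
    ultimately have "a = i k" using inj_onD[OF pair_root_inj[OF assms(1)]] by blast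
    moreover have "l < i 1" "i 1 \<le> i k" using X(5) k(1) idx_chain_first_least[OF X(2) k(1)] by auto
    ultimately show ?thesis using Q(3) ab by auto
  qed
  define P where "P = insert (l, n) Q"
  have "(l, n) \<notin> Q" using Q(3) by auto
  then have "card P = s"
    using Q(2) nested_in_finite[OF _ Q(1)] assms(3) unfolding P_def by simp
  moreover have "nested_in ({1..n} - J) P"
    unfolding P_def using nested_in_insert_outer[OF Q(1)] inside X(3,4,6) n_J by auto
  moreover have "X = pair_root n ` P" unfolding P_def X(1) Q(4) by (simp add: pair_root_def)
  ultimately show ?thesis unfolding P_def by blast
qed

text \<open>Conversely, removing the interval [l,n] from such a family leaves a nested family strictly
  inside it, which is listed by an index chain with l < i_1.\<close>
lemma A2_J_supset:
  assumes "n \<ge> 2" and nest: "nested_in ({1..n} - J) P" and ln: "(l, n) \<in> P"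
  shows "pair_root n ` P \<in> A2_J n (card P) J"
proof -
  define Q where "Q = P - {(l, n)}"
  have Q_nest: "nested_in ({1..n} - J) Q" unfolding Q_def by (rule nested_in_Diff[OF nest])
  have "finite P" using nested_in_finite[OF _ nest] by simp
  then have card_Q: "card P - 1 = card Q" unfolding Q_def using ln by simp
  have inside: "l < a \<and> b < n" if "(a, b) \<in> Q" for a b
  proof -
    have "(a, b) \<in> P" "(a, b) \<noteq> (l, n)" using that unfolding Q_def by auto
    then have "(a < l \<and> n < b) \<or> (l < a \<and> b < n)"
      using nest ln unfolding nested_in_def nested_def by fastforce
    moreover have "b \<le> n" using nest \<open>(a, b) \<in> P\<close> unfolding nested_in_def by auto
    ultimately show ?thesis by auto
  qed
  then have "\<forall>(a, b)\<in>Q. b < n" by auto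
  with Q_nest obtain i j where ij: "idx_chain n (card Q) i j" "\<forall>k\<in>{1..card Q}. i k \<notin> J \<and> j k \<notin> J"
    "Q = (\<lambda>k. (i k, j k)) ` {1..card Q}" "pair_root n ` Q = betaset n (card Q) i j"
    by (rule nested_family_idx_chain)
  have l_first: "1 \<le> card Q \<longrightarrow> l < i 1"
  proof
    assume "1 \<le> card Q"
    then have "(i 1, j 1) \<in> Q" using ij(3) by auto
    then show "l < i 1" using inside by auto
  qed
  have l_n: "1 \<le> l" "l \<le> n" "l \<notin> J" "n \<notin> J" using nest ln unfolding nested_in_def by auto
  have image: "pair_root n ` P = insert (alpha l n) (betaset n (card Q) i j)"
  proof -
    have "P = insert (l, n) Q" using ln unfolding Q_def by auto
    then show ?thesis using ij(4) by (simp add: pair_root_def)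
  qed
  have "betaset n (card Q) i j \<in> A1_J n (card Q) J" unfolding A1_J_def using ij(1,2) by blast
  moreover have "insert (alpha l n) (betaset n (card Q) i j) \<in> A2 n (card P)"
    unfolding A2_def card_Q using ij(1) l_first l_n by blast
  ultimately show ?thesis
    unfolding A2_J_def image card_Q if_not_P[OF l_n(4)] using ij(1) l_first l_n by blast
qed

lemma A2_J_eq:
  assumes "n \<ge> 2" "1 \<le> s"
  shows "A2_J n s J = (\<lambda>P. pair_root n ` P) `
           {P. nested_in ({1..n} - J) P \<and> card P = s \<and> (\<exists>l. (l, n) \<in> P)}"
  using A2_J_subset[OF assms(1) _ assms(2)] A2_J_supset[OF assms(1)] by blast

lemma sums_card_by_size:
  assumes "finite F"
  shows "(\<lambda>s. real (card {X\<in>F. card X = s})) sums real (card F)"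
proof -
  have "card F = (\<Sum>s\<in>card ` F. card {X\<in>F. card X = s})"
    using sum.image_gen[OF assms, of "\<lambda>_. 1 :: nat" card] by simp
  moreover have "(\<lambda>s. real (card {X\<in>F. card X = s})) sums (\<Sum>s\<in>card ` F. real (card {X\<in>F. card X = s}))"
    by (rule sums_finite) (use assms in auto)
  ultimately show ?thesis by simp
qed

lemma nested_families_image_inj:
  assumes "n \<ge> 2"
  shows "inj_on (\<lambda>P. pair_root n ` P) {P. nested_in ({1..n} - J) P}"
proof (rule inj_on_subset[OF pair_root_image_inj[OF assms]])
  show "{P. nested_in ({1..n} - J) P} \<subseteq> Pow (root_pairs n)"
    using nested_in_root_pairs[of "{1..n} - J" n] by blast
qed

text \<open>For s >= 1, splitting the nested families of size s according to whether some interval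
  ends at n splits A_{s,J} into A^1_{s,J} and A^2_{s,J}; injectivity makes the union disjoint.\<close>
lemma A_sJ_partition:
  assumes "n \<ge> 2" "J \<subseteq> {1..n}" "1 \<le> s"
  shows "A_sJ n s J = A1_J n s J \<union> A2_J n s J" "A1_J n s J \<inter> A2_J n s J = {}"
proof -
  let ?rho = "\<lambda>P. pair_root n ` P"
  define F1 where "F1 = {P. nested_in ({1..n} - J) P \<and> card P = s \<and> (\<forall>(a, b)\<in>P. b < n)}"
  define F2 where "F2 = {P. nested_in ({1..n} - J) P \<and> card P = s \<and> (\<exists>l. (l, n) \<in> P)}"
  have ends_at_most_n: "b \<le> n" if "nested_in ({1..n} - J) P" "(a, b) \<in> P" for P a b
    using that unfolding nested_in_def by auto
  have "{P. nested_in ({1..n} - J) P \<and> card P = s} = F1 \<union> F2"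
  proof (intro equalityI subsetI)
    fix P assume "P \<in> {P. nested_in ({1..n} - J) P \<and> card P = s}"
    then show "P \<in> F1 \<union> F2" unfolding F1_def F2_def
      using ends_at_most_n[of P] by (auto simp: le_less)
  qed (auto simp: F1_def F2_def)
  then show "A_sJ n s J = A1_J n s J \<union> A2_J n s J"
    unfolding A_sJ_eq[OF assms(1,2)] A1_J_eq[OF assms(1)] A2_J_eq[OF assms(1,3)] F1_def F2_def
    by (simp add: image_Un)
  have "F1 \<inter> F2 = {}" unfolding F1_def F2_def by auto
  then have "?rho ` F1 \<inter> ?rho ` F2 = {}"
    using inj_on_image_Int[OF nested_families_image_inj[OF assms(1), of J], of F1 F2]
    unfolding F1_def F2_def by auto
  then show "A1_J n s J \<inter> A2_J n s J = {}"
    unfolding A1_J_eq[OF assms(1)] A2_J_eq[OF assms(1,3)] F1_def F2_def .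
qed

lemma card_A_sJ:
  assumes "n \<ge> 2" "J \<subseteq> {1..n}"
  shows "card (A_sJ n s J) = card {P. nested_in ({1..n} - J) P \<and> card P = s}"
  unfolding A_sJ_eq[OF assms]
  by (rule card_image, rule inj_on_subset[OF nested_families_image_inj[OF assms(1)]]) blast

theorem mainTheorem11:
  fixes n :: nat and J :: "nat set"
  assumes "n \<ge> 2" and "J \<subseteq> {1..n}"
  shows "(\<forall>s\<ge>1. A_sJ n s J = A1_J n s J \<union> A2_J n s J
                  \<and> A1_J n s J \<inter> A2_J n s J = {})
         \<and> (\<lambda>s. real (card (A_sJ n s J))) sums (2 ^ (n - card J))"
proof
  show "\<forall>s\<ge>1. A_sJ n s J = A1_J n s J \<union> A2_J n s J \<and> A1_J n s J \<inter> A2_J n s J = {}"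
    using A_sJ_partition[OF assms] by blast
  let ?F = "{P. nested_in ({1..n} - J) P}"
  have card_F: "card ?F = 2 ^ (n - card J)"
    using card_nested_in[of "{1..n} - J"] assms(2) by (simp add: card_Diff_subset finite_subset)
  then have "finite ?F" by (intro card_ge_0_finite) simp
  then have "(\<lambda>s. real (card (A_sJ n s J))) sums real (card ?F)"
    using sums_card_by_size[of ?F] by (simp add: card_A_sJ[OF assms])
  then show "(\<lambda>s. real (card (A_sJ n s J))) sums (2 ^ (n - card J))"
    using card_F by simp
qed

end
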